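(* Let $\mathfrak g$ be a finite-dimensional real Lie algebra whose derived algebra $\mathfrak g'=[\mathfrak g,\mathfrak g]$ is abelian, and suppose that for every $Y\in\mathfrak g$ the restriction $\operatorname{ad}(Y)|_{\mathfrak g'}$ is semisimple with real eigenvalues. Then $\mathfrak g$ admits an inner product with a geodesic basis, unless $\mathfrak g$ is isomorphic to $\mathcal A_n$ for some $n\ge 1$.
   Context: For an inner product $\langle\cdot,\cdot\rangle$ on a real Lie algebra $\mathfrak g$, a nonzero $X\in\mathfrak g$ is a geodesic element if $\langle X,[X,Y]\rangle=0$ for all $Y\in\mathfrak g$; a geodesic basis is a basis consisting of geodesic elements. For $n\ge1$, $\mathcal A_n$ denotes the $(n+1)$-dimensional real Lie algebra with basis $\{Y,X_1,\dots,X_n\}$ and brackets $[Y,X_i]=X_i$, $[X_i,X_j]=0$ (i.e. the abelian algebra $\mathbb R^n$ extended by one element acting as the identity map). *)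

theory Defs
  imports "HOL-Analysis.Analysis"
begin

definition lie_algebra :: "('a::real_vector \<Rightarrow> 'a \<Rightarrow> 'a) \<Rightarrow> bool" where
  "lie_algebra br \<longleftrightarrow> bilinear br \<and> (\<forall>x. br x x = 0) \<and>
     (\<forall>x y z. br x (br y z) + br y (br z x) + br z (br x y) = 0)"

definition finite_dim_space :: "'a::real_vector itself \<Rightarrow> bool" where
  "finite_dim_space TYPE('a) \<longleftrightarrow> (\<exists>B::'a set. finite B \<and> span B = UNIV)"

definition is_basis :: "'a::real_vector set \<Rightarrow> bool" where
  "is_basis B \<longleftrightarrow> independent B \<and> span B = UNIV"

definition derived :: "('a::real_vector \<Rightarrow> 'a \<Rightarrow> 'a) \<Rightarrow> 'a set" where
  "derived br = span {br x y | x y. True}"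

text \<open>A linear endomorphism T restricted to an invariant subspace V is semisimple with
  real eigenvalues, i.e. diagonalizable over the reals: V has a basis of eigenvectors of T.\<close>
definition semisimple_real_on :: "('a::real_vector \<Rightarrow> 'a) \<Rightarrow> 'a set \<Rightarrow> bool" where
  "semisimple_real_on T V \<longleftrightarrow>
     (\<exists>B. B \<subseteq> V \<and> independent B \<and> span B = V \<and> (\<forall>b\<in>B. \<exists>c::real. T b = c *\<^sub>R b))"

definition inner_product_form :: "('a::real_vector \<Rightarrow> 'a \<Rightarrow> real) \<Rightarrow> bool" where
  "inner_product_form ip \<longleftrightarrow> bilinear ip \<and> (\<forall>x y. ip x y = ip y x) \<and>
     (\<forall>x. x \<noteq> 0 \<longrightarrow> ip x x > 0)"

definition geodesic_element ::
  "('a::real_vector \<Rightarrow> 'a \<Rightarrow> real) \<Rightarrow> ('a \<Rightarrow> 'a \<Rightarrow> 'a) \<Rightarrow> 'a \<Rightarrow> bool" where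
  "geodesic_element ip br X \<longleftrightarrow> X \<noteq> 0 \<and> (\<forall>Y. ip X (br X Y) = 0)"

definition iso_A :: "('a::real_vector \<Rightarrow> 'a \<Rightarrow> 'a) \<Rightarrow> nat \<Rightarrow> bool" where
  "iso_A br n \<longleftrightarrow> (\<exists>Y (X::nat \<Rightarrow> 'a).
      inj_on X {1..n} \<and> Y \<notin> X ` {1..n} \<and> is_basis (insert Y (X ` {1..n})) \<and>
      (\<forall>i\<in>{1..n}. br Y (X i) = X i) \<and>
      (\<forall>i\<in>{1..n}. \<forall>j\<in>{1..n}. br (X i) (X j) = 0))"

end

theory Submission
  imports Defs "HOL-Library.Quadratic_Discriminant"
begin

text \<open>
  The derived algebra \<open>\<gg>'\<close> is abelian and \<open>ad(\<gg>)\<close> acts on it by commuting diagonalizable maps,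
  so \<open>\<gg>'\<close> has a basis \<open>B\<close> of common eigenvectors, \<open>[Y,b] = \<lambda>\<^sub>b(Y) b\<close>, with weights \<open>\<lambda>\<^sub>b\<close>
  vanishing on \<open>\<gg>'\<close>. For any inner product, nonzero vectors orthogonal to \<open>\<gg>'\<close> are geodesic,
  because \<open>[X,Y] \<in> \<gg>'\<close>; so it suffices to find geodesic vectors \<open>X\<^sub>b\<close> with \<open>\<langle>X\<^sub>b,b'\<rangle> = \<delta>(b,b')\<close>.

  Extend \<open>B\<close> to a basis of \<open>\<gg>\<close> by vectors spanning a complement \<open>H\<close>. If \<open>dim H \<ge> 2\<close>, take
  \<open>X\<^sub>b = u\<^sub>b + (terms in \<gg>')\<close> with \<open>0 \<noteq> u\<^sub>b \<in> H \<inter> ker \<lambda>\<^sub>b\<close>. By the Jacobi identity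
  \<open>\<langle>X\<^sub>b,[X\<^sub>b,Z]\<rangle>\<close> is a multiple of \<open>\<lambda>\<^sub>b(Z)\<close>, and shearing a coordinate inner product in the
  direction \<open>b\<close> makes that multiple vanish. If \<open>H = \<real>y\<close>, either all eigenvalues \<open>\<lambda>\<^sub>b(y)\<close> agree,
  and then \<open>\<gg>\<close> is abelian or isomorphic to \<open>\<A>\<^sub>n\<close>, or two of them differ. In the latter case an
  inner product with \<open>y \<perp> \<gg>'\<close> can be chosen for which \<open>v \<mapsto> \<langle>v,[y,v]\<rangle>\<close> is indefinite on
  \<open>\<gg>'\<close>; its isotropic vectors are geodesic and span \<open>\<gg>'\<close>.
\<close>

definition has_geodesic_basis :: "('a::real_vector \<Rightarrow> 'a \<Rightarrow> 'a) \<Rightarrow> bool" where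
  "has_geodesic_basis br \<longleftrightarrow>
     (\<exists>ip. inner_product_form ip \<and> (\<exists>B. is_basis B \<and> (\<forall>X\<in>B. geodesic_element ip br X)))"

definition diagonalizable_on :: "('a::real_vector \<Rightarrow> 'a) \<Rightarrow> 'a set \<Rightarrow> bool" where
  "diagonalizable_on T V \<longleftrightarrow> V \<subseteq> span {v \<in> V. \<exists>c. T v = c *\<^sub>R v}"

section \<open>Simultaneous diagonalization\<close>

lemma diagonalizable_on_if_semisimple_real_on:
  assumes "semisimple_real_on T V"
  shows "diagonalizable_on T V"
proof -
  obtain B where B: "B \<subseteq> V" "span B = V" "\<forall>b\<in>B. \<exists>c. T b = c *\<^sub>R b"
    using assms unfolding semisimple_real_on_def by blast
  then have "B \<subseteq> {v \<in> V. \<exists>c. T v = c *\<^sub>R v}" by auto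
  then show ?thesis
    using span_mono B(2) unfolding diagonalizable_on_def by blast
qed

lemma eigencomponents_in_invariant_subspace:
  fixes T :: "'a::real_vector \<Rightarrow> 'a"
  assumes lin: "linear T" and U: "subspace U" and inv: "\<And>u. u \<in> U \<Longrightarrow> T u \<in> U"
  shows "finite C \<Longrightarrow> (\<And>c. c \<in> C \<Longrightarrow> T (x c) = c *\<^sub>R x c) \<Longrightarrow> (\<Sum>c\<in>C. x c) \<in> U
     \<Longrightarrow> \<forall>c\<in>C. x c \<in> U"
proof (induction C arbitrary: x rule: finite_induct)
  case empty
  then show ?case by simp
next
  case (insert d C)
  \<comment> \<open>\<open>T - d\<close> kills the \<open>d\<close>-component and rescales the others, so induction applies to them.\<close>
  have "T (\<Sum>c\<in>insert d C. x c) = (\<Sum>c\<in>insert d C. c *\<^sub>R x c)"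
    using insert.prems(1) lin by (simp add: linear_sum)
  then have "T (\<Sum>c\<in>insert d C. x c) - d *\<^sub>R (\<Sum>c\<in>insert d C. x c)
      = (\<Sum>c\<in>C. (c - d) *\<^sub>R x c)"
    using insert by (simp add: scaleR_sum_right scaleR_diff_left sum_subtractf algebra_simps)
  moreover have "T (\<Sum>c\<in>insert d C. x c) - d *\<^sub>R (\<Sum>c\<in>insert d C. x c) \<in> U"
    using insert.prems(2) inv U by (intro subspace_diff subspace_scale) auto
  ultimately have "(\<Sum>c\<in>C. (c - d) *\<^sub>R x c) \<in> U" by simp
  moreover have "\<And>c. c \<in> C \<Longrightarrow> T ((c - d) *\<^sub>R x c) = c *\<^sub>R ((c - d) *\<^sub>R x c)"
    using insert.prems(1) lin by (simp add: linear_scale)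
  ultimately have scaled: "\<forall>c\<in>C. (c - d) *\<^sub>R x c \<in> U"
    using insert.IH[of "\<lambda>c. (c - d) *\<^sub>R x c"] by blast
  have xC: "\<forall>c\<in>C. x c \<in> U"
  proof
    fix c assume c: "c \<in> C"
    then have "c \<noteq> d" using insert.hyps(2) by auto
    then have "x c = inverse (c - d) *\<^sub>R ((c - d) *\<^sub>R x c)" by simp
    then show "x c \<in> U" using scaled c U by (metis subspace_scale)
  qed
  then have "(\<Sum>c\<in>C. x c) \<in> U" using U by (intro subspace_sum) auto
  then have "x d \<in> U"
    using insert U by (metis add_diff_cancel_right' subspace_diff sum.insert)
  with xC show ?case by auto
qed

lemma eigenvector_decomposition:
  fixes T :: "'a::real_vector \<Rightarrow> 'a"
  assumes lin: "linear T" and V: "subspace V"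
    and v: "v \<in> span {w \<in> V. \<exists>c. T w = c *\<^sub>R w}"
  shows "\<exists>C x. finite C \<and> (\<forall>c\<in>C. x c \<in> V \<and> T (x c) = c *\<^sub>R x c) \<and> v = (\<Sum>c\<in>C. x c)"
  using v
proof (induction rule: span_induct_alt)
  case base
  show ?case by (rule exI[of _ "{}"]) auto
next
  case (step c0 w y)
  from step.hyps(1) obtain e where w: "w \<in> V" "T w = e *\<^sub>R w" by auto
  from step.IH obtain C x where C: "finite C" "\<forall>c\<in>C. x c \<in> V \<and> T (x c) = c *\<^sub>R x c"
    "y = (\<Sum>c\<in>C. x c)" by blast
  define x' where "x' c = (if c \<in> C then x c else 0) + (if c = e then c0 *\<^sub>R w else 0)" for c
  have "(\<Sum>c\<in>insert e C. x' c) = (\<Sum>c\<in>insert e C. (if c \<in> C then x c else 0))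
      + (\<Sum>c\<in>insert e C. (if c = e then c0 *\<^sub>R w else 0))"
    by (simp add: x'_def sum.distrib)
  also have "(\<Sum>c\<in>insert e C. (if c \<in> C then x c else 0)) = (\<Sum>c\<in>C. x c)"
  proof -
    have "insert e C \<inter> C = C" by auto
    then show ?thesis using C(1) by (simp add: sum.If_cases)
  qed
  also have "(\<Sum>c\<in>insert e C. (if c = e then c0 *\<^sub>R w else 0)) = c0 *\<^sub>R w"
    using C(1) by (simp add: sum.delta)
  finally have "c0 *\<^sub>R w + y = (\<Sum>c\<in>insert e C. x' c)" using C(3) by simp
  moreover have "\<forall>c\<in>insert e C. x' c \<in> V \<and> T (x' c) = c *\<^sub>R x' c"
    using C(2) w V lin
    by (auto simp: x'_def linear_add linear_scale linear_0 subspace_add subspace_scale subspace_0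
        scaleR_add_right mult.commute)
  ultimately show ?case using C(1) by blast
qed

lemma diagonalizable_on_invariant_subspace:
  fixes T :: "'a::real_vector \<Rightarrow> 'a"
  assumes lin: "linear T" and U: "subspace U" and V: "subspace V" and "U \<subseteq> V"
    and inv: "\<And>u. u \<in> U \<Longrightarrow> T u \<in> U" and diag: "diagonalizable_on T V"
  shows "diagonalizable_on T U"
  unfolding diagonalizable_on_def
proof
  fix u assume u: "u \<in> U"
  then obtain C x where C: "finite C" "\<forall>c\<in>C. x c \<in> V \<and> T (x c) = c *\<^sub>R x c" "u = (\<Sum>c\<in>C. x c)"
    using eigenvector_decomposition[OF lin V] diag \<open>U \<subseteq> V\<close> unfolding diagonalizable_on_def
    by blast
  have "\<forall>c\<in>C. x c \<in> U"
    using eigencomponents_in_invariant_subspace[OF lin U inv C(1), of x] C u by auto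
  then show "u \<in> span {w \<in> U. \<exists>c. T w = c *\<^sub>R w}"
    unfolding C(3) using C(2) by (intro span_sum span_base) auto
qed

lemma subspace_joint_eigenspace:
  assumes V: "subspace V" and lin: "\<And>T. T \<in> Ts \<Longrightarrow> linear T"
  shows "subspace {w \<in> V. \<forall>T\<in>Ts. T w = \<alpha> T *\<^sub>R w}"
  unfolding subspace_def
  using subspace_0[OF V] subspace_add[OF V] subspace_scale[OF V] lin
  by (auto simp: linear_0 linear_add linear_scale scaleR_add_right)

lemma simultaneously_diagonalizable_on:
  assumes "finite Ts" and V: "subspace V"
    and "\<And>T. T \<in> Ts \<Longrightarrow> linear T"
    and "\<And>T v. T \<in> Ts \<Longrightarrow> v \<in> V \<Longrightarrow> T v \<in> V"
    and "\<And>T. T \<in> Ts \<Longrightarrow> diagonalizable_on T V"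
    and "\<And>S T v. S \<in> Ts \<Longrightarrow> T \<in> Ts \<Longrightarrow> v \<in> V \<Longrightarrow> S (T v) = T (S v)"
  shows "V \<subseteq> span {v \<in> V. \<forall>T\<in>Ts. \<exists>c. T v = c *\<^sub>R v}"
  using assms(1,3-)
proof (induction Ts rule: finite_induct)
  case empty
  then show ?case by (auto intro: span_base)
next
  case (insert T0 Ts)
  have "v \<in> span {v \<in> V. \<forall>T\<in>insert T0 Ts. \<exists>c. T v = c *\<^sub>R v}"
    if v: "v \<in> V" "\<forall>T\<in>Ts. \<exists>c. T v = c *\<^sub>R v" for v
  proof -
    obtain \<alpha> where \<alpha>: "\<forall>T\<in>Ts. T v = \<alpha> T *\<^sub>R v"
      using bchoice[OF v(2)] by blast
    define U where "U = {w \<in> V. \<forall>T\<in>Ts. T w = \<alpha> T *\<^sub>R w}"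
    have U: "subspace U"
      unfolding U_def using insert.prems(1) by (intro subspace_joint_eigenspace[OF V]) auto
    have "T0 u \<in> U" if u: "u \<in> U" for u
    proof -
      have "T (T0 u) = \<alpha> T *\<^sub>R T0 u" if T: "T \<in> Ts" for T
      proof -
        have "T (T0 u) = T0 (T u)"
          using insert.prems(4)[of T T0 u] T u by (simp add: U_def)
        also have "\<dots> = \<alpha> T *\<^sub>R T0 u"
          using T u linear_scale[OF insert.prems(1)[of T0]] by (auto simp: U_def)
        finally show ?thesis .
      qed
      then show ?thesis using u insert.prems(2) by (simp add: U_def)
    qed
    then have "diagonalizable_on T0 U"
      using insert.prems by (intro diagonalizable_on_invariant_subspace[OF _ U V]) (auto simp: U_def)
    moreover have "v \<in> U" using v \<alpha> by (simp add: U_def)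
    ultimately have "v \<in> span {w \<in> U. \<exists>c. T0 w = c *\<^sub>R w}"
      unfolding diagonalizable_on_def by blast
    also have "\<dots> \<subseteq> span {v \<in> V. \<forall>T\<in>insert T0 Ts. \<exists>c. T v = c *\<^sub>R v}"
      by (rule span_mono) (auto simp: U_def)
    finally show ?thesis .
  qed
  then have "span {v \<in> V. \<forall>T\<in>Ts. \<exists>c. T v = c *\<^sub>R v}
      \<subseteq> span {v \<in> V. \<forall>T\<in>insert T0 Ts. \<exists>c. T v = c *\<^sub>R v}"
    by (intro span_minimal) auto
  moreover have "V \<subseteq> span {v \<in> V. \<forall>T\<in>Ts. \<exists>c. T v = c *\<^sub>R v}"
  proof (rule insert.IH)
    show "T v \<in> V" if "T \<in> Ts" "v \<in> V" for T v
      using insert.prems(2)[of T v] that by auto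
    show "S (T v) = T (S v)" if "S \<in> Ts" "T \<in> Ts" "v \<in> V" for S T v
      using insert.prems(4)[of S T v] that by auto
  qed (use insert.prems(1,3) in auto)
  ultimately show ?case by blast
qed

section \<open>Inner products and isotropic vectors\<close>

lemma independent_imp_finite:
  assumes "finite_dim_space TYPE('a::real_vector)" and "independent (S::'a set)"
  shows "finite S"
proof -
  obtain S0 :: "'a set" where "finite S0" "span S0 = UNIV"
    using assms(1) by (auto simp: finite_dim_space_def)
  then show ?thesis using independent_span_bound[of S0 S] assms(2) by auto
qed

lemma linear_representation_UNIV:
  assumes "independent A" and "span A = UNIV"
  shows "linear (\<lambda>X. representation A X v)"
proof -
  have eq: "((*\<^sub>R) :: real \<Rightarrow> real \<Rightarrow> real) = (*)" by (intro ext) simp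
  have "Vector_Spaces.linear (*\<^sub>R) (*) (\<lambda>X. representation A X v)"
    by (rule linear_representation[OF assms])
  then show ?thesis unfolding linear_def eq[symmetric] by simp
qed

definition coord_ip :: "'a::real_vector set \<Rightarrow> 'a \<Rightarrow> 'a \<Rightarrow> real" where
  "coord_ip A X Y = (\<Sum>v\<in>A. representation A X v * representation A Y v)"

lemma inner_product_form_coord_ip:
  assumes A: "independent A" "span A = UNIV" "finite A"
  shows "inner_product_form (coord_ip A)"
  unfolding inner_product_form_def
proof (intro conjI allI impI)
  note lin = linear_representation_UNIV[OF A(1,2)]
  show "bilinear (coord_ip A)"
    unfolding bilinear_def coord_ip_def
    by (auto intro!: linearI simp: linear_add[OF lin] linear_scale[OF lin] sum.distrib
        sum_distrib_left algebra_simps)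
  fix X Y :: 'a
  show "coord_ip A X Y = coord_ip A Y X" by (simp add: coord_ip_def mult.commute)
next
  fix X :: 'a assume "X \<noteq> 0"
  moreover have "X = (\<Sum>v\<in>A. representation A X v *\<^sub>R v)"
    using sum_representation_eq[OF A(1) _ A(3)] A(2) by auto
  ultimately obtain v where v: "v \<in> A" "representation A X v \<noteq> 0"
    by (metis (no_types, lifting) scale_zero_left sum.neutral)
  have "0 < representation A X v * representation A X v"
    using v(2) not_real_square_gt_zero by blast
  also have "\<dots> \<le> coord_ip A X X"
    unfolding coord_ip_def using v A(3) by (intro member_le_sum) auto
  finally show "coord_ip A X X > 0" .
qed

lemma coord_ip_basis_right:
  assumes "independent A" "finite A" "v \<in> A"
  shows "coord_ip A X v = representation A X v"
proof -
  have "coord_ip A X v = (\<Sum>w\<in>A. if w = v then representation A X v else 0)"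
    unfolding coord_ip_def by (intro sum.cong) (auto simp: representation_basis assms)
  also have "\<dots> = representation A X v" using assms by simp
  finally show ?thesis .
qed

lemma inner_product_form_pullback:
  fixes ip :: "'a::real_vector \<Rightarrow> 'a \<Rightarrow> real" and \<Phi> :: "'b::real_vector \<Rightarrow> 'a"
  assumes ip: "inner_product_form ip" and lin: "linear \<Phi>" and inj: "\<And>X. \<Phi> X = 0 \<Longrightarrow> X = 0"
  shows "inner_product_form (\<lambda>X Y. ip (\<Phi> X) (\<Phi> Y))"
  unfolding inner_product_form_def
proof (intro conjI allI impI)
  have bil: "bilinear ip" using ip by (simp add: inner_product_form_def)
  show "bilinear (\<lambda>X Y. ip (\<Phi> X) (\<Phi> Y))"
    using bil lin unfolding bilinear_def by (auto intro: linear_compose[unfolded o_def])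
  fix X Y :: 'b show "ip (\<Phi> X) (\<Phi> Y) = ip (\<Phi> Y) (\<Phi> X)"
    using ip by (simp add: inner_product_form_def)
next
  fix X :: 'b assume "X \<noteq> 0"
  then have "\<Phi> X \<noteq> 0" using inj by blast
  then show "ip (\<Phi> X) (\<Phi> X) > 0" using ip by (simp add: inner_product_form_def)
qed

lemma span_isotropic_if_indefinite:
  fixes f :: "'a::real_vector \<Rightarrow> 'a \<Rightarrow> real"
  assumes f: "bilinear f" and V: "subspace V"
    and pq: "p \<in> V" "q \<in> V" "f p p * f q q < 0"
  shows "V \<subseteq> span {v \<in> V. f v v = 0}"
proof
  fix v assume v: "v \<in> V"
  let ?S = "{v \<in> V. f v v = 0}"
  show "v \<in> span ?S"
  proof (cases "f v v = 0")
    case True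
    then show ?thesis using v by (intro span_base) auto
  next
    case False
    then have "f v v * f p p < 0 \<or> f v v * f q q < 0"
      using pq(3) by (auto simp: mult_less_0_iff)
    then obtain r where r: "r \<in> V" "f r r * f v v < 0"
      using pq(1,2) by (metis mult.commute)
    \<comment> \<open>\<open>t \<mapsto> f (v + t r) (v + t r)\<close> changes sign, so it has two distinct roots.\<close>
    have quadratic: "f (v + t *\<^sub>R r) (v + t *\<^sub>R r) = f r r * t\<^sup>2 + (f v r + f r v) * t + f v v" for t
      using f by (simp add: bilinear_ladd bilinear_radd bilinear_lmul bilinear_rmul
          power2_eq_square algebra_simps)
    have "f r r \<noteq> 0" using r(2) by auto
    moreover have "discrim (f r r) (f v r + f r v) (f v v) > 0"
      using r(2) zero_le_power2[of "f v r + f r v"] unfolding discrim_def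
      by (simp only: mult.assoc)
    ultimately obtain t1 t2 where t: "t1 \<noteq> t2"
      "f r r * t1\<^sup>2 + (f v r + f r v) * t1 + f v v = 0"
      "f r r * t2\<^sup>2 + (f v r + f r v) * t2 + f v v = 0"
      using discriminant_pos_ex by blast
    have "v + t1 *\<^sub>R r \<in> ?S" "v + t2 *\<^sub>R r \<in> ?S"
      using t quadratic v r V by (auto intro: subspace_add subspace_scale)
    then have "(1 / (t1 - t2)) *\<^sub>R (t1 *\<^sub>R (v + t2 *\<^sub>R r) - t2 *\<^sub>R (v + t1 *\<^sub>R r)) \<in> span ?S"
      by (intro span_scale span_diff span_base)
    moreover have "t1 *\<^sub>R (v + t2 *\<^sub>R r) - t2 *\<^sub>R (v + t1 *\<^sub>R r) = (t1 - t2) *\<^sub>R v"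
      by (simp add: algebra_simps)
    ultimately show ?thesis using t(1) by simp
  qed
qed

section \<open>Geodesic elements\<close>

lemma bracket_in_derived: "br x y \<in> derived br"
  unfolding derived_def by (rule span_base) auto

lemma geodesic_element_if_orthogonal_derived:
  assumes "X \<noteq> 0" and "\<And>d. d \<in> derived br \<Longrightarrow> ip X d = 0"
  shows "geodesic_element ip br X"
  using assms bracket_in_derived by (auto simp: geodesic_element_def)

lemma has_geodesic_basis_if_span_geodesic:
  assumes ip: "inner_product_form ip" and "span {X. geodesic_element ip br X} = UNIV"
  shows "has_geodesic_basis br"
proof -
  obtain G where "G \<subseteq> {X. geodesic_element ip br X}" "independent G"
    "{X. geodesic_element ip br X} \<subseteq> span G"
    using maximal_independent_subset by blast
  moreover from this assms(2) have "span G = UNIV"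
    by (metis span_minimal subspace_span top.extremum_unique)
  ultimately show ?thesis
    using ip unfolding has_geodesic_basis_def is_basis_def by blast
qed

lemma has_geodesic_basis_if_abelian:
  assumes "finite_dim_space TYPE('a::real_vector)" and abelian: "\<And>x y. br x y = (0::'a)"
  shows "has_geodesic_basis br"
proof -
  obtain A :: "'a set" where A: "independent A" "UNIV \<subseteq> span A"
    using maximal_independent_subset[of UNIV] by blast
  have "finite A" using independent_imp_finite[OF assms(1) A(1)] .
  then have ip: "inner_product_form (coord_ip A)"
    using A by (intro inner_product_form_coord_ip) auto
  then have bil: "bilinear (coord_ip A)" by (simp add: inner_product_form_def)
  have "geodesic_element (coord_ip A) br X" if "X \<in> A" for X
    using that A(1) dependent_zero[of A]
    by (auto simp: geodesic_element_def abelian bilinear_rzero[OF bil])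
  then show ?thesis
    using ip A unfolding has_geodesic_basis_def is_basis_def by blast
qed

section \<open>Metabelian Lie algebras with diagonalizable action on the derived algebra\<close>

locale metabelian_lie_algebra =
  fixes br :: "'a::real_vector \<Rightarrow> 'a \<Rightarrow> 'a"
  assumes finite_dim: "finite_dim_space TYPE('a)" and lie: "lie_algebra br"
    and derived_abelian: "\<forall>u\<in>derived br. \<forall>v\<in>derived br. br u v = 0"
    and ad_semisimple: "\<forall>Y. semisimple_real_on (br Y) (derived br)"
begin

abbreviation D :: "'a set" where "D \<equiv> derived br"

lemma bilinear_br: "bilinear br"
  using lie by (simp add: lie_algebra_def)

lemma br_self: "br x x = 0"
  using lie by (simp add: lie_algebra_def)

lemma jacobi: "br x (br y z) + br y (br z x) + br z (br x y) = 0"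
  using lie by (simp add: lie_algebra_def)

lemmas br_add_left = bilinear_ladd[OF bilinear_br]
  and br_add_right = bilinear_radd[OF bilinear_br]
  and br_scale_left = bilinear_lmul[OF bilinear_br]
  and br_scale_right = bilinear_rmul[OF bilinear_br]
  and br_zero_left[simp] = bilinear_lzero[OF bilinear_br]
  and br_zero_right[simp] = bilinear_rzero[OF bilinear_br]
  and br_diff_left = bilinear_lsub[OF bilinear_br]

lemma linear_br: "linear (br x)"
  using bilinear_br by (simp add: bilinear_def)

lemma br_sum_right: "br x (\<Sum>i\<in>I. f i) = (\<Sum>i\<in>I. br x (f i))"
  using linear_sum[OF linear_br] by (simp add: o_def)

lemma linear_br_left: "linear (\<lambda>x. br x z)"
  using bilinear_br by (simp add: bilinear_def)

lemma br_sum_left: "br (\<Sum>i\<in>I. f i) z = (\<Sum>i\<in>I. br (f i) z)"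
  using linear_sum[OF linear_br_left] by (simp add: o_def)

lemma br_antisym: "br x y = - br y x"
proof -
  have "br (x + y) (x + y) = br x x + br y x + (br x y + br y y)"
    by (simp only: br_add_left br_add_right)
  then have "br x y + br y x = 0"
    using br_self[of "x + y"] br_self[of x] br_self[of y] by (simp add: add.commute)
  then show ?thesis by (simp add: eq_neg_iff_add_eq_0)
qed

lemma subspace_derived: "subspace D"
  by (simp add: derived_def)

lemma ad_commute_on_derived:
  assumes "d \<in> D"
  shows "br Y (br Z d) = br Z (br Y d)"
proof -
  have "br d (br Y Z) = 0" using derived_abelian assms bracket_in_derived by blast
  then have "br Y (br Z d) + br Z (br d Y) = 0" using jacobi[of Y Z d] by simp
  then show ?thesis
    using br_antisym[of d Y] bilinear_rneg[OF bilinear_br, of Z "br Y d"] by simp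
qed

lemma common_eigenvector_of_span:
  assumes "Y \<in> span S" and "\<forall>Y\<in>S. \<exists>c. br Y d = c *\<^sub>R d"
  shows "\<exists>c. br Y d = c *\<^sub>R d"
  using assms(1)
proof (induction rule: span_induct_alt)
  case base
  show ?case by (auto intro: exI[of _ 0])
next
  case (step c0 a Y)
  then obtain ca cY where "br a d = ca *\<^sub>R d" "br Y d = cY *\<^sub>R d" using assms(2) by blast
  then have "br (c0 *\<^sub>R a + Y) d = (c0 * ca + cY) *\<^sub>R d"
    by (simp add: br_add_left br_scale_left scaleR_add_left)
  then show ?case by blast
qed

lemma derived_common_eigenbasis:
  obtains B where "independent B" "span B = D" "\<forall>b\<in>B. \<forall>Y. \<exists>c. br Y b = c *\<^sub>R b"
proof -
  obtain A0 :: "'a set" where A0: "independent A0" "UNIV \<subseteq> span A0"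
    using maximal_independent_subset[of UNIV] by blast
  let ?S = "{d \<in> D. \<forall>Y. \<exists>c. br Y d = c *\<^sub>R d}"
  have "D \<subseteq> span {d \<in> D. \<forall>T\<in>br ` A0. \<exists>c. T d = c *\<^sub>R d}"
  proof (rule simultaneously_diagonalizable_on[OF _ subspace_derived])
    show "finite (br ` A0)" using independent_imp_finite[OF finite_dim A0(1)] by simp
    show "linear T" if "T \<in> br ` A0" for T using that linear_br by auto
    show "T v \<in> D" if "T \<in> br ` A0" for T v using that bracket_in_derived by auto
    show "diagonalizable_on T D" if "T \<in> br ` A0" for T
      using that ad_semisimple diagonalizable_on_if_semisimple_real_on by auto
    show "S (T v) = T (S v)" if "S \<in> br ` A0" "T \<in> br ` A0" "v \<in> D" for S T v
      using that by (auto intro: ad_commute_on_derived)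
  qed
  also have "\<dots> \<subseteq> span ?S"
  proof (rule span_mono, safe)
    fix d Y assume "d \<in> D" "\<forall>T\<in>br ` A0. \<exists>c. T d = c *\<^sub>R d"
    then show "\<exists>c. br Y d = c *\<^sub>R d"
      using common_eigenvector_of_span[of Y A0 d] A0(2) by auto
  qed
  finally have D_span: "D \<subseteq> span ?S" .
  obtain B where B: "B \<subseteq> ?S" "independent B" "?S \<subseteq> span B"
    using maximal_independent_subset[of ?S] by blast
  have "span B \<subseteq> D" using B(1) subspace_derived by (intro span_minimal) auto
  moreover have "D \<subseteq> span B" using D_span B(3) by (meson span_minimal subspace_span subset_trans)
  ultimately show ?thesis using that B by blast
qed

end

text \<open>
  \<open>B\<close> is a basis of \<open>\<gg>'\<close> of common eigenvectors of \<open>ad(\<gg>)\<close> and \<open>A \<supseteq> B\<close> a basis of \<open>\<gg>\<close>;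
  \<open>weight b\<close> is the functional \<open>\<lambda>\<^sub>b\<close> with \<open>[Y,b] = \<lambda>\<^sub>b(Y) b\<close>.
\<close>

locale adapted_basis = metabelian_lie_algebra br for br :: "'a::real_vector \<Rightarrow> 'a \<Rightarrow> 'a" +
  fixes B A :: "'a set"
  assumes independent_B: "independent B" and span_B: "span B = D"
    and B_eigen: "\<forall>b\<in>B. \<forall>Y. \<exists>c. br Y b = c *\<^sub>R b"
    and B_subset_A: "B \<subseteq> A" and independent_A: "independent A" and span_A: "span A = UNIV"
begin

definition coord :: "'a \<Rightarrow> 'a \<Rightarrow> real" where
  "coord v X = representation A X v"

definition weight :: "'a \<Rightarrow> 'a \<Rightarrow> real" where
  "weight b Y = coord b (br Y b)"

lemma finite_A: "finite A"
  using independent_imp_finite[OF finite_dim independent_A] .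

lemma finite_B: "finite B"
  using finite_subset[OF B_subset_A finite_A] .

lemma B_subset_D: "B \<subseteq> D"
  using span_B span_superset by blast

lemma linear_coord: "linear (coord v)"
  using linear_representation_UNIV[OF independent_A span_A] by (simp add: coord_def[abs_def])

lemma coord_add: "coord v (X + Y) = coord v X + coord v Y"
  using linear_add[OF linear_coord] by blast

lemma coord_scale: "coord v (c *\<^sub>R X) = c * coord v X"
  using linear_scale[OF linear_coord] by simp

lemma coord_zero[simp]: "coord v 0 = 0"
  using linear_0[OF linear_coord] by blast

lemma coord_diff: "coord v (X - Y) = coord v X - coord v Y"
  using linear_diff[OF linear_coord] by blast

lemma coord_sum: "coord v (\<Sum>i\<in>I. f i) = (\<Sum>i\<in>I. coord v (f i))"
  using linear_sum[OF linear_coord] by (simp add: o_def)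

lemma coord_basis: "w \<in> A \<Longrightarrow> coord v w = (if v = w then 1 else 0)"
  unfolding coord_def using representation_basis[OF independent_A] by simp

lemma coord_eq_0_if_span:
  "S \<subseteq> A \<Longrightarrow> X \<in> span S \<Longrightarrow> v \<notin> S \<Longrightarrow> coord v X = 0"
  unfolding coord_def using representation_extend[OF independent_A] representation_ne_zero by metis

lemma coord_complement_derived: "h \<in> A - B \<Longrightarrow> d \<in> D \<Longrightarrow> coord h d = 0"
  using coord_eq_0_if_span[OF B_subset_A] span_B by auto

lemma coord_derived_complement: "b \<in> B \<Longrightarrow> u \<in> span (A - B) \<Longrightarrow> coord b u = 0"
  using coord_eq_0_if_span[of "A - B" u b] by auto

lemma coord_ip_A: "v \<in> A \<Longrightarrow> coord_ip A X v = coord v X"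
  using coord_ip_basis_right[OF independent_A finite_A] by (simp add: coord_def)

lemma inner_product_form_coord_ip_A: "inner_product_form (coord_ip A)"
  using inner_product_form_coord_ip[OF independent_A span_A finite_A] .

lemma expansion: "X = (\<Sum>v\<in>A. coord v X *\<^sub>R v)"
  unfolding coord_def using sum_representation_eq[OF independent_A _ finite_A] span_A by auto

lemma expansion_derived:
  assumes "X \<in> D"
  shows "X = (\<Sum>b\<in>B. coord b X *\<^sub>R b)"
proof -
  have "X = (\<Sum>v\<in>A. coord v X *\<^sub>R v)" by (rule expansion)
  also have "\<dots> = (\<Sum>b\<in>B. coord b X *\<^sub>R b)"
    using coord_complement_derived assms by (intro sum.mono_neutral_right[OF finite_A B_subset_A]) auto
  finally show ?thesis .
qed

lemma sum_scaleR_B_in_derived: "(\<Sum>b\<in>B. c b *\<^sub>R b) \<in> D"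
proof -
  have "(\<Sum>b\<in>B. c b *\<^sub>R b) \<in> span B" by (intro span_sum span_scale span_base)
  then show ?thesis using span_B by simp
qed

lemma coord_sum_scaleR_B: "b \<in> B \<Longrightarrow> coord b (\<Sum>b'\<in>B. f b' *\<^sub>R b') = f b"
proof -
  assume b: "b \<in> B"
  have "coord b (\<Sum>b'\<in>B. f b' *\<^sub>R b') = (\<Sum>b'\<in>B. if b' = b then f b else 0)"
    using B_subset_A by (simp add: coord_sum coord_scale) (intro sum.cong, auto simp: coord_basis b)
  also have "\<dots> = f b" using b finite_B by simp
  finally show ?thesis .
qed

lemma br_eigen: "b \<in> B \<Longrightarrow> br Y b = weight b Y *\<^sub>R b"
proof -
  assume b: "b \<in> B"
  then obtain c where c: "br Y b = c *\<^sub>R b" using B_eigen by blast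
  have "weight b Y = c"
    unfolding weight_def c coord_scale using coord_basis[of b b] b B_subset_A by auto
  then show ?thesis using c by simp
qed

lemma br_eigen_left: "b \<in> B \<Longrightarrow> br b Z = - (weight b Z *\<^sub>R b)"
  using br_antisym[of b Z] br_eigen by simp

lemma br_sum_scaleR_B_left:
  "br (\<Sum>b\<in>B. c b *\<^sub>R b) Z = (\<Sum>b\<in>B. (c b * - weight b Z) *\<^sub>R b)"
  by (auto simp: br_sum_left br_scale_left br_eigen_left intro!: sum.cong)

lemma weight_scale: "weight b (c *\<^sub>R X) = c * weight b X"
  by (simp add: weight_def br_scale_left coord_scale)

lemma weight_diff: "weight b (X - Y) = weight b X - weight b Y"
  by (simp add: weight_def br_diff_left coord_diff)

lemma weight_derived: "d \<in> D \<Longrightarrow> b \<in> B \<Longrightarrow> weight b d = 0"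
  using derived_abelian B_subset_D by (auto simp: weight_def)

lemma coord_br_derived:
  assumes d: "d \<in> D" and b: "b \<in> B"
  shows "coord b (br Y d) = weight b Y * coord b d"
proof -
  have "coord b (br Y d) = coord b (\<Sum>b'\<in>B. (coord b' d * weight b' Y) *\<^sub>R b')"
    by (subst expansion_derived[OF d]) (simp add: br_sum_right br_scale_right br_eigen)
  then show ?thesis using b by (simp add: coord_sum_scaleR_B)
qed

text \<open>The \<open>b\<close>-coordinate of the Jacobi identity for \<open>a, u, Z\<close>.\<close>

lemma weight_cocycle:
  assumes b: "b \<in> B" and a: "weight b a = 1" and u: "weight b u = 0"
  shows "coord b (br u Z) = - weight b Z * coord b (br a u)"
proof -
  have "coord b (br a (br u Z) + br u (br Z a) + br Z (br a u)) = 0" by (simp add: jacobi)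
  then have "weight b a * coord b (br u Z) + weight b u * coord b (br Z a)
      + weight b Z * coord b (br a u) = 0"
    by (simp add: coord_add coord_br_derived[OF bracket_in_derived b])
  then show ?thesis using a u by simp
qed

lemma bilinear_expansion_derived:
  assumes "bilinear ip" and W: "W \<in> D"
  shows "ip X W = (\<Sum>b\<in>B. coord b W * ip X b)"
proof -
  have "ip X W = ip X (\<Sum>b\<in>B. coord b W *\<^sub>R b)" by (subst expansion_derived[OF W]) simp
  also have "\<dots> = (\<Sum>b\<in>B. coord b W * ip X b)"
    using assms(1) unfolding bilinear_def by (simp add: linear_sum[of "ip X"] o_def linear_scale)
  finally show ?thesis .
qed

lemma span_geodesic_if_dual_family:
  assumes bil: "bilinear ip"
    and geodesic: "\<And>b. b \<in> B \<Longrightarrow> geodesic_element ip br (X b)"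
    and dual: "\<And>b b'. b \<in> B \<Longrightarrow> b' \<in> B \<Longrightarrow> ip (X b) b' = (if b = b' then 1 else 0)"
  shows "span {X. geodesic_element ip br X} = UNIV"
proof -
  let ?G = "{X. geodesic_element ip br X}"
  have "Z \<in> span ?G" for Z
  proof -
    define Z' where "Z' = Z - (\<Sum>b\<in>B. ip Z b *\<^sub>R X b)"
    have lin: "linear (\<lambda>X. ip X b')" for b' using bil by (simp add: bilinear_def)
    have "ip Z' b' = 0" if b': "b' \<in> B" for b'
    proof -
      have "ip (\<Sum>b\<in>B. ip Z b *\<^sub>R X b) b' = (\<Sum>b\<in>B. ip Z b * ip (X b) b')"
        using linear_sum[OF lin[of b'], of "\<lambda>b. ip Z b *\<^sub>R X b" B]
        by (simp add: o_def bilinear_lmul[OF bil])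
      then have "ip Z' b' = ip Z b' - (\<Sum>b\<in>B. ip Z b * ip (X b) b')"
        by (simp add: Z'_def bilinear_lsub[OF bil])
      also have "(\<Sum>b\<in>B. ip Z b * ip (X b) b') = (\<Sum>b\<in>B. if b = b' then ip Z b else 0)"
        using b' by (intro sum.cong) (auto simp: dual)
      also have "\<dots> = ip Z b'" using b' finite_B by simp
      finally show ?thesis by simp
    qed
    then have "ip Z' d = 0" if "d \<in> D" for d
      using bilinear_expansion_derived[OF bil that] by simp
    then have "Z' \<in> span ?G"
      using geodesic_element_if_orthogonal_derived[of Z' br ip]
      by (cases "Z' = 0") (simp_all add: span_zero span_base)
    moreover have "(\<Sum>b\<in>B. ip Z b *\<^sub>R X b) \<in> span ?G"
      using geodesic by (intro span_sum span_scale span_base) auto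
    ultimately show ?thesis unfolding Z'_def by (metis diff_add_cancel span_add)
  qed
  then show ?thesis by auto
qed

subsection \<open>Complements of dimension at least two\<close>

definition shear :: "('a \<Rightarrow> 'a \<Rightarrow> real) \<Rightarrow> 'a \<Rightarrow> 'a" where
  "shear \<sigma> X = X + (\<Sum>b\<in>B. \<sigma> b X *\<^sub>R b)"

definition sheared_ip :: "('a \<Rightarrow> 'a \<Rightarrow> real) \<Rightarrow> 'a \<Rightarrow> 'a \<Rightarrow> real" where
  "sheared_ip \<sigma> X Y = coord_ip A (shear \<sigma> X) (shear \<sigma> Y)"

definition dual_vector :: "('a \<Rightarrow> 'a \<Rightarrow> real) \<Rightarrow> 'a \<Rightarrow> 'a \<Rightarrow> 'a" where
  "dual_vector \<sigma> u b = u + (\<Sum>b'\<in>B. ((if b' = b then 1 else 0) - \<sigma> b' u) *\<^sub>R b')"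

context
  fixes \<sigma> :: "'a \<Rightarrow> 'a \<Rightarrow> real"
  assumes linear_\<sigma>: "\<And>b. linear (\<sigma> b)" and \<sigma>_derived: "\<And>b d. d \<in> D \<Longrightarrow> \<sigma> b d = 0"
begin

lemma linear_shear: "linear (shear \<sigma>)"
proof (rule linearI)
  fix X Y show "shear \<sigma> (X + Y) = shear \<sigma> X + shear \<sigma> Y"
    by (simp add: shear_def linear_add[OF linear_\<sigma>] scaleR_add_left sum.distrib add_ac)
next
  fix c X show "shear \<sigma> (c *\<^sub>R X) = c *\<^sub>R shear \<sigma> X"
    by (simp add: shear_def linear_scale[OF linear_\<sigma>] scaleR_add_right scaleR_sum_right)
qed

lemma shear_eq_0_imp: "shear \<sigma> X = 0 \<Longrightarrow> X = 0"
proof -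
  assume "shear \<sigma> X = 0"
  then have "X = - (\<Sum>b\<in>B. \<sigma> b X *\<^sub>R b)" by (simp add: shear_def eq_neg_iff_add_eq_0)
  then have "X \<in> D" using subspace_neg[OF subspace_derived sum_scaleR_B_in_derived[of "\<lambda>b. \<sigma> b X"]] by simp
  then show "X = 0" using \<open>shear \<sigma> X = 0\<close> \<sigma>_derived by (simp add: shear_def)
qed

lemma inner_product_form_sheared_ip: "inner_product_form (sheared_ip \<sigma>)"
  unfolding sheared_ip_def[abs_def]
  by (rule inner_product_form_pullback[OF inner_product_form_coord_ip_A linear_shear shear_eq_0_imp])

lemma sheared_ip_basis:
  assumes b: "b \<in> B"
  shows "sheared_ip \<sigma> X b = coord b X + \<sigma> b X"
proof -
  have "shear \<sigma> b = b" using \<sigma>_derived B_subset_D b by (auto simp: shear_def)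
  moreover have "b \<in> A" using b B_subset_A by blast
  ultimately have "sheared_ip \<sigma> X b = coord b (shear \<sigma> X)"
    by (simp add: sheared_ip_def coord_ip_A)
  also have "\<dots> = coord b X + \<sigma> b X"
    using b by (simp add: shear_def coord_add coord_sum_scaleR_B)
  finally show ?thesis .
qed

lemma sheared_ip_dual_vector:
  assumes u: "u \<in> span (A - B)" and b: "b \<in> B" and b': "b' \<in> B"
  shows "sheared_ip \<sigma> (dual_vector \<sigma> u b) b' = (if b = b' then 1 else 0)"
proof -
  have "coord b' (dual_vector \<sigma> u b) = (if b' = b then 1 else 0) - \<sigma> b' u"
    using b' by (simp add: dual_vector_def coord_add coord_derived_complement[OF _ u]
        coord_sum_scaleR_B)
  moreover have "\<sigma> b' (dual_vector \<sigma> u b) = \<sigma> b' u"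
    using \<sigma>_derived[OF sum_scaleR_B_in_derived]
    by (simp add: dual_vector_def linear_add[OF linear_\<sigma>])
  ultimately show ?thesis using sheared_ip_basis[OF b'] by auto
qed

lemma geodesic_dual_vector:
  assumes b: "b \<in> B" and u: "u \<in> span (A - B)"
    and cocycle: "\<And>Z. coord b (br u Z) = (1 - \<sigma> b u) * weight b Z"
  shows "geodesic_element (sheared_ip \<sigma>) br (dual_vector \<sigma> u b)"
  unfolding geodesic_element_def
proof (intro conjI allI)
  let ?X = "dual_vector \<sigma> u b"
  have bil: "bilinear (sheared_ip \<sigma>)"
    using inner_product_form_sheared_ip by (simp add: inner_product_form_def)
  show "?X \<noteq> 0"
    using sheared_ip_dual_vector[OF u b b] bilinear_lzero[OF bil] by force
  fix Z
  define f where "f b' = ((if b' = b then 1 else 0) - \<sigma> b' u) * - weight b' Z" for b'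
  have "br ?X Z = br u Z + (\<Sum>b'\<in>B. f b' *\<^sub>R b')"
    by (simp add: dual_vector_def f_def br_add_left br_sum_scaleR_B_left)
  then have "coord b (br ?X Z) = coord b (br u Z) + f b"
    using b by (simp add: coord_add coord_sum_scaleR_B)
  also have "\<dots> = 0" using cocycle[of Z] by (simp add: f_def algebra_simps)
  finally have coord_b: "coord b (br ?X Z) = 0" .
  have "sheared_ip \<sigma> ?X (br ?X Z) = (\<Sum>b'\<in>B. coord b' (br ?X Z) * sheared_ip \<sigma> ?X b')"
    by (rule bilinear_expansion_derived[OF bil bracket_in_derived])
  also have "\<dots> = (\<Sum>b'\<in>B. if b' = b then coord b (br ?X Z) else 0)"
    using b u by (intro sum.cong) (auto simp: sheared_ip_dual_vector)
  also have "\<dots> = 0" using coord_b b finite_B by simp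
  finally show "sheared_ip \<sigma> ?X (br ?X Z) = 0" .
qed

lemma has_geodesic_basis_if_dual_vectors:
  assumes u: "\<And>b. b \<in> B \<Longrightarrow> u b \<in> span (A - B)"
    and cocycle: "\<And>b Z. b \<in> B \<Longrightarrow> coord b (br (u b) Z) = (1 - \<sigma> b (u b)) * weight b Z"
  shows "has_geodesic_basis br"
proof (rule has_geodesic_basis_if_span_geodesic[OF inner_product_form_sheared_ip])
  have "bilinear (sheared_ip \<sigma>)"
    using inner_product_form_sheared_ip by (simp add: inner_product_form_def)
  then show "span {X. geodesic_element (sheared_ip \<sigma>) br X} = UNIV"
    using u cocycle geodesic_dual_vector sheared_ip_dual_vector
    by (intro span_geodesic_if_dual_family[where X = "\<lambda>b. dual_vector \<sigma> (u b) b"]) auto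
qed

end

lemma kernel_weight_in_complement:
  assumes h1: "h1 \<in> A - B" and h2: "h2 \<in> A - B" and "h1 \<noteq> h2"
  shows "\<exists>u. u \<in> span (A - B) \<and> weight b u = 0 \<and> (coord h1 u \<noteq> 0 \<or> coord h2 u \<noteq> 0)"
proof -
  have coords: "coord h1 h1 = 1" "coord h2 h2 = 1" "coord h1 h2 = 0" "coord h2 h1 = 0"
    using assms coord_basis by auto
  have span: "h1 \<in> span (A - B)" "h2 \<in> span (A - B)"
    using h1 h2 by (auto intro: span_base)
  show ?thesis
  proof (cases "weight b h1 = 0 \<and> weight b h2 = 0")
    case True
    then show ?thesis using span(1) coords by auto
  next
    case False
    define u where "u = weight b h2 *\<^sub>R h1 - weight b h1 *\<^sub>R h2"
    have "u \<in> span (A - B)" unfolding u_def using span by (intro span_diff span_scale)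
    moreover have "weight b u = 0" by (simp add: u_def weight_diff weight_scale)
    moreover have "coord h1 u \<noteq> 0 \<or> coord h2 u \<noteq> 0"
      using False coords by (auto simp: u_def coord_diff coord_scale)
    ultimately show ?thesis by blast
  qed
qed

lemma has_geodesic_basis_if_codim_ge_2:
  assumes "h1 \<in> A - B" and "h2 \<in> A - B" and "h1 \<noteq> h2"
  shows "has_geodesic_basis br"
proof -
  define nz where "nz b \<longleftrightarrow> (\<exists>Z. weight b Z \<noteq> 0)" for b
  define u0 where "u0 b = (SOME u. u \<in> span (A - B) \<and> weight b u = 0
      \<and> (coord h1 u \<noteq> 0 \<or> coord h2 u \<noteq> 0))" for b
  define h where "h b = (if coord h1 (u0 b) \<noteq> 0 then h1 else h2)" for b
  have u0: "u0 b \<in> span (A - B)" "weight b (u0 b) = 0" "coord (h b) (u0 b) \<noteq> 0" for b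
    using someI_ex[OF kernel_weight_in_complement[OF assms, of b]] by (auto simp: u0_def h_def)
  have h: "h b \<in> A - B" for b using assms by (simp add: h_def)
  define a where "a b = (1 / weight b (SOME Z. weight b Z \<noteq> 0)) *\<^sub>R (SOME Z. weight b Z \<noteq> 0)"
    for b
  have a: "weight b (a b) = 1" if "nz b" for b
    using that someI_ex[of "\<lambda>Z. weight b Z \<noteq> 0"] by (simp add: nz_def a_def weight_scale)
  define u where "u b = (if nz b then u0 b else 0)" for b
  \<comment> \<open>chosen so that \<open>\<sigma> b (u b) = 1 + coord b [a b, u b]\<close>, which cancels the cocycle\<close>
  define \<sigma> where "\<sigma> b X = (if nz b
      then (1 + coord b (br (a b) (u b))) / coord (h b) (u b) * coord (h b) X else 0)" for b X
  show ?thesis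
  proof (rule has_geodesic_basis_if_dual_vectors[of \<sigma> u])
    show "linear (\<sigma> b)" for b
      by (rule linearI) (simp_all add: \<sigma>_def coord_add coord_scale distrib_left)
    show "\<sigma> b d = 0" if "d \<in> D" for b d
      using coord_complement_derived[OF h that] by (simp add: \<sigma>_def)
    show "u b \<in> span (A - B)" for b
      using u0(1) by (simp add: u_def span_zero)
    show "coord b (br (u b) Z) = (1 - \<sigma> b (u b)) * weight b Z" if b: "b \<in> B" for b Z
    proof (cases "nz b")
      case True
      then show ?thesis
        using weight_cocycle[OF b a[OF True] u0(2)] u0(3)[of b] by (simp add: u_def \<sigma>_def)
    next
      case False
      then show ?thesis by (simp add: u_def nz_def)
    qed
  qed
qed

end

subsection \<open>Complements of dimension one\<close>

locale codim_one_adapted_basis = adapted_basis br B A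
  for br :: "'a::real_vector \<Rightarrow> 'a \<Rightarrow> 'a" and B A +
  fixes y :: 'a
  assumes A_eq: "A = insert y B" and y_notin_B: "y \<notin> B"
begin

lemma coord_y_derived: "d \<in> D \<Longrightarrow> coord y d = 0"
  using coord_complement_derived A_eq y_notin_B by simp

lemma decomposition: "Z - coord y Z *\<^sub>R y \<in> D"
proof -
  have "Z = coord y Z *\<^sub>R y + (\<Sum>b\<in>B. coord b Z *\<^sub>R b)"
    using expansion[of Z] A_eq y_notin_B finite_B by simp
  then have "Z - coord y Z *\<^sub>R y = (\<Sum>b\<in>B. coord b Z *\<^sub>R b)"
    by (simp add: algebra_simps)
  then show ?thesis using sum_scaleR_B_in_derived by simp
qed

lemma br_decomposition_left: "br Z W = coord y Z *\<^sub>R br y W + br (Z - coord y Z *\<^sub>R y) W"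
proof -
  have "br Z W = br (coord y Z *\<^sub>R y + (Z - coord y Z *\<^sub>R y)) W" by simp
  then show ?thesis by (simp only: br_add_left br_scale_left)
qed

lemma br_decomposition_right: "br Z W = coord y W *\<^sub>R br Z y + br Z (W - coord y W *\<^sub>R y)"
proof -
  have "br Z W = br Z (coord y W *\<^sub>R y + (W - coord y W *\<^sub>R y))" by simp
  then show ?thesis by (simp only: br_add_right br_scale_right)
qed

lemma y_notin_D: "y \<notin> D"
  using coord_y_derived coord_basis[of y y] A_eq by auto

lemma weight_codim_one: "b \<in> B \<Longrightarrow> weight b Z = coord y Z * weight b y"
  using weight_derived[OF decomposition, of b Z]
  by (simp add: weight_diff weight_scale)

lemma br_eq_0_if_weights_zero:
  assumes "\<forall>b\<in>B. weight b y = 0"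
  shows "br x z = 0"
proof -
  have br_derived: "br Z d = 0" if "d \<in> D" for Z d
  proof -
    have "br Z d = (\<Sum>b\<in>B. coord b d *\<^sub>R br Z b)"
      by (subst expansion_derived[OF that]) (simp add: br_sum_right br_scale_right)
    also have "\<dots> = 0"
    proof (intro sum.neutral ballI)
      fix b assume "b \<in> B"
      then have "weight b Z = 0" using weight_codim_one[of b Z] assms by simp
      then show "coord b d *\<^sub>R br Z b = 0" using br_eigen[OF \<open>b \<in> B\<close>] by simp
    qed
    finally show ?thesis .
  qed
  have "br y z = 0"
    using br_decomposition_right[of y z] br_derived[OF decomposition] by (simp add: br_self)
  moreover have "br (x - coord y x *\<^sub>R y) z = 0"
    using br_antisym[of "x - coord y x *\<^sub>R y" z] br_derived[OF decomposition, of z x] by simp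
  ultimately show ?thesis using br_decomposition_left[of x z] by simp
qed

lemma iso_A_if_weights_equal:
  assumes "B \<noteq> {}" and "c \<noteq> 0" and weights: "\<forall>b\<in>B. weight b y = c"
  shows "iso_A br (card B)"
proof -
  obtain X where X: "bij_betw X {1..card B} B"
    using ex_bij_betw_nat_finite_1[OF finite_B] by blast
  then have XB: "X ` {1..card B} = B" by (simp add: bij_betw_def)
  define Y where "Y = (1 / c) *\<^sub>R y"
  have Y_notin_span: "Y \<notin> span B"
  proof
    assume "Y \<in> span B"
    then have "c *\<^sub>R Y \<in> D" using span_B span_scale[of Y B c] by simp
    then show False using y_notin_D \<open>c \<noteq> 0\<close> by (simp add: Y_def)
  qed
  have "Z \<in> span (insert Y B)" for Z
  proof -
    have "Z - coord y Z *\<^sub>R y \<in> span (insert Y B)"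
      using decomposition[of Z] span_B span_mono[of B "insert Y B"] by auto
    moreover have "(c * coord y Z) *\<^sub>R Y \<in> span (insert Y B)"
      by (intro span_scale span_base) simp
    ultimately have "(c * coord y Z) *\<^sub>R Y + (Z - coord y Z *\<^sub>R y) \<in> span (insert Y B)"
      by (intro span_add)
    moreover have "(c * coord y Z) *\<^sub>R Y + (Z - coord y Z *\<^sub>R y) = Z"
      using \<open>c \<noteq> 0\<close> by (simp add: Y_def)
    ultimately show ?thesis by simp
  qed
  moreover have "independent (insert Y B)"
    using Y_notin_span independent_B by (rule independent_insertI)
  ultimately have "is_basis (insert Y B)" unfolding is_basis_def by auto
  show ?thesis
    unfolding iso_A_def
  proof (intro exI conjI ballI)
    show "inj_on X {1..card B}" using X by (simp add: bij_betw_def)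
    show "Y \<notin> X ` {1..card B}" using Y_notin_span XB span_base by blast
    show "is_basis (insert Y (X ` {1..card B}))" using \<open>is_basis (insert Y B)\<close> XB by simp
    fix i assume "i \<in> {1..card B}"
    then have Xi: "X i \<in> B" using XB by blast
    show "br Y (X i) = X i"
      using br_eigen[OF Xi, of y] weights Xi \<open>c \<noteq> 0\<close> by (simp add: Y_def br_scale_left)
    fix j assume "j \<in> {1..card B}"
    then have "X j \<in> B" using XB by blast
    then show "br (X i) (X j) = 0" using derived_abelian Xi B_subset_D by blast
  qed
qed

lemma exists_ip_indefinite_on_derived:
  assumes b1: "b1 \<in> B" and b2: "b2 \<in> B"
    and c1: "weight b1 y \<noteq> 0" and c12: "weight b1 y \<noteq> weight b2 y"
  shows "\<exists>ip p q. inner_product_form ip \<and> (\<forall>d\<in>D. ip y d = 0) \<and>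
    p \<in> D \<and> q \<in> D \<and> ip p (br y p) * ip q (br y q) < 0"
proof -
  define c1 where "c1 = weight b1 y"
  define c2 where "c2 = weight b2 y"
  have "b1 \<noteq> b2" using c12 by auto
  have "c1 \<noteq> 0" using c1 by (simp add: c1_def)
  \<comment> \<open>\<open>\<kappa>\<close> is chosen so that \<open>c1 \<langle>q,[y,q]\<rangle> = c1 c2 - \<bar>c1 c2\<bar> - 1\<close> below.\<close>
  define \<kappa> where "\<kappa> = - (2 + \<bar>c1 * c2\<bar>) / (c2 - c1)"
  define x where "x = 1 / c1 - \<kappa>"
  define q where "q = x *\<^sub>R b1 + b2"
  define \<Phi> where "\<Phi> X = X + (\<kappa> * coord b2 X) *\<^sub>R b1" for X
  define ip where "ip X Y = coord_ip A (\<Phi> X) (\<Phi> Y)" for X Y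
  have coords: "coord b1 b1 = 1" "coord b2 b2 = 1" "coord b1 b2 = 0" "coord b2 b1 = 0"
    "coord b2 y = 0"
    using coord_basis b1 b2 \<open>b1 \<noteq> b2\<close> B_subset_A A_eq y_notin_B by auto
  have "linear \<Phi>"
    by (rule linearI) (simp_all add: \<Phi>_def coord_add coord_scale algebra_simps)
  moreover have "X = 0" if "\<Phi> X = 0" for X
  proof -
    have "coord b2 (\<Phi> X) = coord b2 X" by (simp add: \<Phi>_def coord_add coord_scale coords)
    then show ?thesis using that by (simp add: \<Phi>_def)
  qed
  ultimately have ip: "inner_product_form ip"
    unfolding ip_def by (intro inner_product_form_pullback[OF inner_product_form_coord_ip_A])
  have coord_ip_sym: "coord_ip A X Y = coord_ip A Y X" for X Y
    using inner_product_form_coord_ip_A unfolding inner_product_form_def by blast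
  have y_perp: "ip y d = 0" if "d \<in> D" for d
  proof -
    have "\<Phi> d \<in> D"
      using that b1 B_subset_D subspace_derived by (auto simp: \<Phi>_def intro!: subspace_add subspace_scale)
    moreover have "\<Phi> y = y" by (simp add: \<Phi>_def coords)
    ultimately have "ip y d = coord_ip A y (\<Phi> d)" by (simp add: ip_def)
    also have "\<dots> = coord_ip A (\<Phi> d) y" by (rule coord_ip_sym)
    also have "\<dots> = coord y (\<Phi> d)" using A_eq coord_ip_A[of y] by blast
    also have "\<dots> = 0" using \<open>\<Phi> d \<in> D\<close> by (rule coord_y_derived)
    finally show ?thesis .
  qed
  have coord_ip_plane: "coord_ip A (\<alpha> *\<^sub>R b1 + \<beta> *\<^sub>R b2) (\<gamma> *\<^sub>R b1 + \<delta> *\<^sub>R b2) = \<alpha> * \<gamma> + \<beta> * \<delta>"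
    for \<alpha> \<beta> \<gamma> \<delta>
  proof -
    have bil: "bilinear (coord_ip A)"
      using inner_product_form_coord_ip_A by (simp add: inner_product_form_def)
    have "b1 \<in> A" "b2 \<in> A" using b1 b2 B_subset_A by auto
    then show ?thesis
      by (simp add: bilinear_ladd[OF bil] bilinear_radd[OF bil] bilinear_lmul[OF bil]
          bilinear_rmul[OF bil] coord_ip_A coord_add coord_scale coords)
  qed
  have eigen: "br y b1 = c1 *\<^sub>R b1" "br y b2 = c2 *\<^sub>R b2"
    using br_eigen b1 b2 by (auto simp: c1_def c2_def)
  have "ip b1 (br y b1) = coord_ip A (1 *\<^sub>R b1 + 0 *\<^sub>R b2) (c1 *\<^sub>R b1 + 0 *\<^sub>R b2)"
    by (simp add: ip_def \<Phi>_def eigen coord_scale coords)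
  then have p: "ip b1 (br y b1) = c1" by (simp only: coord_ip_plane)
  have "\<Phi> q = (x + \<kappa>) *\<^sub>R b1 + 1 *\<^sub>R b2"
    by (simp add: \<Phi>_def q_def coord_add coord_scale coords algebra_simps)
  moreover have "\<Phi> (br y q) = (x * c1 + \<kappa> * c2) *\<^sub>R b1 + c2 *\<^sub>R b2"
    by (simp add: \<Phi>_def q_def br_add_right br_scale_right eigen coord_add coord_scale coords
        algebra_simps)
  ultimately have "ip q (br y q) = (x + \<kappa>) * (x * c1 + \<kappa> * c2) + 1 * c2"
    by (simp only: ip_def coord_ip_plane)
  moreover have "x + \<kappa> = 1 / c1" by (simp add: x_def)
  ultimately have "ip q (br y q) = (x * c1 + \<kappa> * c2) / c1 + c2" by simp
  then have "c1 * ip q (br y q) = x * c1 + \<kappa> * c2 + c1 * c2"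
    using \<open>c1 \<noteq> 0\<close> by (simp add: field_simps)
  also have "x * c1 = 1 - \<kappa> * c1" using \<open>c1 \<noteq> 0\<close> by (simp add: x_def field_simps)
  finally have "c1 * ip q (br y q) = 1 + \<kappa> * (c2 - c1) + c1 * c2" by (simp add: algebra_simps)
  also have "\<kappa> * (c2 - c1) = - (2 + \<bar>c1 * c2\<bar>)"
    using c12 by (simp add: \<kappa>_def c1_def c2_def)
  finally have "ip b1 (br y b1) * ip q (br y q) < 0" by (simp add: p abs_if)
  moreover have "q \<in> D"
    using b1 b2 B_subset_D subspace_derived by (auto simp: q_def intro: subspace_add subspace_scale)
  moreover have "b1 \<in> D" using b1 B_subset_D by blast
  ultimately show ?thesis using ip y_perp by blast
qed

lemma has_geodesic_basis_if_indefinite: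
  assumes ip: "inner_product_form ip" and y_perp: "\<forall>d\<in>D. ip y d = 0"
    and "p \<in> D" "q \<in> D" "ip p (br y p) * ip q (br y q) < 0"
  shows "has_geodesic_basis br"
proof (rule has_geodesic_basis_if_span_geodesic[OF ip])
  let ?G = "{X. geodesic_element ip br X}"
  have bil: "bilinear ip" using ip by (simp add: inner_product_form_def)
  have "bilinear (\<lambda>v w. ip v (br y w))"
    unfolding bilinear_def
  proof (intro conjI allI)
    fix v show "linear (\<lambda>w. ip v (br y w))"
      using linear_compose[OF linear_br, of "ip v"] bil by (simp add: bilinear_def o_def)
  next
    fix w show "linear (\<lambda>v. ip v (br y w))" using bil by (simp add: bilinear_def)
  qed
  then have isotropic: "D \<subseteq> span {v \<in> D. ip v (br y v) = 0}"
    using assms(3-) by (intro span_isotropic_if_indefinite subspace_derived)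
  have "geodesic_element ip br d" if "d \<in> D" "ip d (br y d) = 0" "d \<noteq> 0" for d
    unfolding geodesic_element_def
  proof (intro conjI allI)
    show "d \<noteq> 0" by fact
    fix Z
    have "br d (Z - coord y Z *\<^sub>R y) = 0"
      using derived_abelian that(1) decomposition by blast
    then have "br d Z = - (coord y Z *\<^sub>R br y d)"
      using br_decomposition_right[of d Z] br_antisym[of d y] by simp
    then show "ip d (br d Z) = 0"
      using that(2) by (simp add: bilinear_rneg[OF bil] bilinear_rmul[OF bil])
  qed
  then have "{v \<in> D. ip v (br y v) = 0} \<subseteq> insert 0 ?G" by auto
  then have D_span: "D \<subseteq> span ?G"
    using isotropic span_mono[of _ "insert 0 ?G"] by auto
  have "geodesic_element ip br y"
    using y_notin_D subspace_0[OF subspace_derived] y_perp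
    by (intro geodesic_element_if_orthogonal_derived) auto
  then have "coord y Z *\<^sub>R y \<in> span ?G" for Z by (intro span_scale span_base) auto
  moreover have "Z - coord y Z *\<^sub>R y \<in> span ?G" for Z using D_span decomposition by blast
  ultimately have "Z \<in> span ?G" for Z
    using span_add[of "coord y Z *\<^sub>R y" ?G "Z - coord y Z *\<^sub>R y"] by simp
  then show "span ?G = UNIV" by auto
qed

lemma has_geodesic_basis_or_iso_A: "has_geodesic_basis br \<or> (\<exists>n\<ge>1. iso_A br n)"
proof (cases "\<exists>b1\<in>B. \<exists>b2\<in>B. weight b1 y \<noteq> weight b2 y")
  case True
  have geodesic: "has_geodesic_basis br"
    if weights: "b1 \<in> B" "b2 \<in> B" "weight b1 y \<noteq> 0" "weight b1 y \<noteq> weight b2 y" for b1 b2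
  proof -
    obtain ip p q where "inner_product_form ip" "\<forall>d\<in>D. ip y d = 0"
      "p \<in> D" "q \<in> D" "ip p (br y p) * ip q (br y q) < 0"
      using exists_ip_indefinite_on_derived[OF weights] by blast
    then show ?thesis by (rule has_geodesic_basis_if_indefinite)
  qed
  from True obtain b1 b2 where b12: "b1 \<in> B" "b2 \<in> B" "weight b1 y \<noteq> weight b2 y" by blast
  show ?thesis
  proof (cases "weight b1 y = 0")
    case True
    then have "has_geodesic_basis br" using b12 by (intro geodesic[of b2 b1]) auto
    then show ?thesis ..
  next
    case False
    then have "has_geodesic_basis br" using b12 by (intro geodesic[of b1 b2]) auto
    then show ?thesis ..
  qed
next
  case equal: False
  show ?thesis
  proof (cases "\<forall>b\<in>B. weight b y = 0")
    case True
    then have "br x z = 0" for x z by (rule br_eq_0_if_weights_zero)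
    then have "has_geodesic_basis br" by (rule has_geodesic_basis_if_abelian[OF finite_dim])
    then show ?thesis ..
  next
    case False
    then obtain b0 where b0: "b0 \<in> B" "weight b0 y \<noteq> 0" by blast
    then have "B \<noteq> {}" by blast
    then have "card B \<ge> 1" using finite_B by (simp add: Suc_le_eq card_gt_0_iff)
    moreover have "\<forall>b\<in>B. weight b y = weight b0 y" using b0(1) equal by blast
    then have "iso_A br (card B)" by (rule iso_A_if_weights_equal[OF \<open>B \<noteq> {}\<close> b0(2)])
    ultimately show ?thesis by blast
  qed
qed

end

theorem theorem1p2:
  fixes br :: "'a::real_vector \<Rightarrow> 'a \<Rightarrow> 'a"
  assumes "finite_dim_space TYPE('a)"
    and "lie_algebra br"
    and "\<forall>u\<in>derived br. \<forall>v\<in>derived br. br u v = 0"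
    and "\<forall>Y. semisimple_real_on (br Y) (derived br)"
    and "\<not> (\<exists>n\<ge>1. iso_A br n)"
  shows "\<exists>ip. inner_product_form ip \<and>
           (\<exists>B. is_basis B \<and> (\<forall>X\<in>B. geodesic_element ip br X))"
proof -
  interpret metabelian_lie_algebra br using assms(1-4) by unfold_locales
  obtain B where B: "independent B" "span B = D" "\<forall>b\<in>B. \<forall>Y. \<exists>c. br Y b = c *\<^sub>R b"
    by (rule derived_common_eigenbasis)
  define A where "A = extend_basis B"
  interpret adapted_basis br B A
    using B by unfold_locales
      (simp_all add: A_def extend_basis_superset independent_extend_basis)
  have "has_geodesic_basis br"
  proof (cases "\<exists>h1\<in>A - B. \<exists>h2\<in>A - B. h1 \<noteq> h2")
    case True
    then show ?thesis using has_geodesic_basis_if_codim_ge_2 by blast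
  next
    case at_most_one: False
    show ?thesis
    proof (cases "A = B")
      case True
      then have "br x z = 0" for x z using derived_abelian span_A span_B by simp
      then show ?thesis by (rule has_geodesic_basis_if_abelian[OF finite_dim])
    next
      case False
      then obtain y where "y \<in> A - B" using B_subset_A by blast
      then have "y \<notin> B" "A = insert y B" using at_most_one B_subset_A by blast+
      then interpret codim_one_adapted_basis br B A y by unfold_locales
      show ?thesis using has_geodesic_basis_or_iso_A assms(5) by blast
    qed
  qed
  then show ?thesis unfolding has_geodesic_basis_def .
qed

end
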